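(* Let $a,b$ be integers with $0<b<a$, let $S=\langle a,a+1,\ldots,a+b\rangle$ with conductor $c$, and let $m\ge 2c$. If $M$ is an $(S,m,r)$-amenable set, then $M-1=\{x-1\mid x\in M\}$ is an $(S,m-1,r)$-amenable set.
   Context: For $x\in S$, $\mathrm D(x)=\{\alpha\in S\mid x-\alpha\in S\}$. The conductor $c$ is the least element of $S$ with $c+n\in S$ for all $n\in\mathbb N$. For $m\ge 2c-1$, a set $M=\{m_1<\cdots<m_r\}\subseteq S$ with $m=m_1$ is $(S,m,r)$-amenable if $\mathrm D(m_i)\cap[m,\infty)\subseteq M$ for all $i$. *)

theory Defs
  imports Main
begin

definition sg_gen :: "nat set \<Rightarrow> nat set" where
  "sg_gen G = {x. \<exists>f::nat \<Rightarrow> nat. x = (\<Sum>g\<in>G. f g * g)}"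

definition conductor :: "nat set \<Rightarrow> nat" where
  "conductor S = (LEAST c. c \<in> S \<and> (\<forall>n. c + n \<in> S))"

text \<open>D(x) = {alpha in S | x - alpha in S}; subtraction is integer
  subtraction, so we require alpha \<le> x explicitly.\<close>
definition Dset :: "nat set \<Rightarrow> nat \<Rightarrow> nat set" where
  "Dset S x = {\<alpha> \<in> S. \<alpha> \<le> x \<and> x - \<alpha> \<in> S}"

text \<open>(S,m,r)-amenable set, including the standing requirement m \<ge> 2c-1.\<close>
definition amenable :: "nat set \<Rightarrow> nat \<Rightarrow> nat \<Rightarrow> nat set \<Rightarrow> bool" where
  "amenable S m r M \<longleftrightarrow>
     int m \<ge> 2 * int (conductor S) - 1 \<and>
     finite M \<and> card M = r \<and> M \<subseteq> S \<and> m \<in> M \<and> (\<forall>x\<in>M. m \<le> x) \<and>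
     (\<forall>x\<in>M. Dset S x \<inter> {m..} \<subseteq> M)"

end

theory Submission
  imports Defs
begin

text \<open>Every element of an amenable set is at least m \<ge> 2c, so subtracting 1 keeps it
  above the conductor and is injective; conversely, if \<alpha> \<ge> m - 1 lies in D(x - 1), then
  \<alpha> + 1 \<ge> c lies in S and x - (\<alpha> + 1) = (x - 1) - \<alpha>, so \<alpha> + 1 \<in> D(x) \<inter> [m, \<infinity>) \<subseteq> M.
  The only facts about S = \<langle>a, \<dots>, a + b\<rangle> used are that it contains all n \<ge> a * a
  (write n = q a + r with r < a \<le> q, so n = (q - r) a + r (a + 1)) and that 1 \<notin> S.\<close>

lemma sg_gen_two_generators:
  assumes "finite G" "g \<in> G" "h \<in> G" "g \<noteq> h"
  shows "i * g + j * h \<in> sg_gen G"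
proof -
  define f where "f = (\<lambda>k. if k = g then i else if k = h then j else 0)"
  have "(\<Sum>k\<in>G. f k * k) = f g * g + (\<Sum>k\<in>G - {g}. f k * k)"
    using assms(1,2) by (rule sum.remove)
  also have "(\<Sum>k\<in>G - {g}. f k * k) = f h * h + (\<Sum>k\<in>G - {g} - {h}. f k * k)"
    using assms by (intro sum.remove) auto
  also have "(\<Sum>k\<in>G - {g} - {h}. f k * k) = 0"
    by (rule sum.neutral) (auto simp: f_def)
  finally have "(\<Sum>k\<in>G. f k * k) = i * g + j * h"
    using assms(4) by (simp add: f_def)
  then show ?thesis
    unfolding sg_gen_def by (intro CollectI exI[of _ f]) simp
qed

lemma sg_gen_interval_ge_square:
  fixes a b n :: nat
  assumes "0 < a" "0 < b" "a * a \<le> n"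
  shows "n \<in> sg_gen {a..a+b}"
proof -
  define q r where "q = n div a" and "r = n mod a"
  have n: "n = q * a + r"
    unfolding q_def r_def by simp
  have "r < a"
    unfolding r_def using assms(1) by simp
  moreover have "a \<le> q"
    unfolding q_def using div_le_mono[OF assms(3), of a] assms(1) by simp
  ultimately have "r \<le> q" by simp
  then have "n = (q - r) * a + r * (a + 1)"
    using n by (simp add: algebra_simps diff_mult_distrib)
  moreover have "(q - r) * a + r * (a + 1) \<in> sg_gen {a..a+b}"
    using assms(2) by (intro sg_gen_two_generators) auto
  ultimately show ?thesis by simp
qed

lemma one_notin_sg_gen:
  assumes "\<And>g. g \<in> G \<Longrightarrow> 1 < g"
  shows "1 \<notin> sg_gen G"
proof
  assume "1 \<in> sg_gen G"
  then obtain f where "1 = (\<Sum>g\<in>G. f g * g)"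
    unfolding sg_gen_def by blast
  then have f: "(\<Sum>g\<in>G. f g * g) = 1" ..
  then have "finite G"
    by (metis sum.infinite zero_neq_one)
  have "\<exists>g\<in>G. f g * g \<noteq> 0"
  proof (rule ccontr)
    assume "\<not> ?thesis"
    then have "(\<Sum>g\<in>G. f g * g) = 0"
      by (intro sum.neutral) blast
    with f show False by simp
  qed
  then obtain g where g: "g \<in> G" "f g * g \<noteq> 0" by blast
  have "g \<le> f g * g"
    using g(2) by simp
  also have "\<dots> \<le> 1"
    using member_le_sum[of g G "\<lambda>g. f g * g"] \<open>finite G\<close> g(1) f by simp
  finally show False
    using assms[OF g(1)] by linarith
qed

lemma mem_if_conductor_le:
  assumes "\<And>n. c0 + n \<in> S" and "conductor S \<le> x"
  shows "x \<in> S"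
proof -
  have "c0 \<in> S \<and> (\<forall>n. c0 + n \<in> S)"
    using assms(1)[of 0] assms(1) by simp
  then have "conductor S \<in> S \<and> (\<forall>n. conductor S + n \<in> S)"
    unfolding conductor_def by (rule LeastI)
  moreover obtain n where "x = conductor S + n"
    using assms(2) le_Suc_ex by blast
  ultimately show ?thesis by simp
qed

lemma Dset_Suc:
  assumes "\<alpha> \<in> Dset S y" and "Suc \<alpha> \<in> S"
  shows "Suc \<alpha> \<in> Dset S (Suc y)"
  using assms unfolding Dset_def by auto

lemma amenable_shift_down:
  fixes S :: "nat set"
  assumes closed: "\<And>x. conductor S \<le> x \<Longrightarrow> x \<in> S"
    and "0 < conductor S" and "2 * conductor S \<le> m"
    and "amenable S m r M"
  shows "amenable S (m - 1) r ((\<lambda>x. x - 1) ` M)"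
proof -
  let ?c = "conductor S" and ?M' = "(\<lambda>x. x - 1) ` M"
  have M: "finite M" "card M = r" "m \<in> M" "\<And>x. x \<in> M \<Longrightarrow> m \<le> x"
    "\<And>x. x \<in> M \<Longrightarrow> Dset S x \<inter> {m..} \<subseteq> M"
    using assms(4) unfolding amenable_def by auto
  have above: "?c < x" if "x \<in> M" for x
    using M(4)[OF that] assms(2,3) by linarith
  have "inj_on (\<lambda>x. x - 1) M"
  proof (rule inj_onI)
    fix x y assume "x \<in> M" "y \<in> M" "x - 1 = y - 1"
    then show "x = y"
      using above[of x] above[of y] by linarith
  qed
  then have "card ?M' = r"
    using M(2) by (simp add: card_image)
  moreover have "?M' \<subseteq> S"
  proof (rule image_subsetI)
    fix x assume "x \<in> M"
    then show "x - 1 \<in> S"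
      using above[of x] by (intro closed) linarith
  qed
  moreover have "Dset S y \<inter> {m - 1..} \<subseteq> ?M'" if "y \<in> ?M'" for y
  proof
    fix \<alpha> assume \<alpha>: "\<alpha> \<in> Dset S y \<inter> {m - 1..}"
    obtain x where x: "x \<in> M" "y = x - 1"
      using \<open>y \<in> ?M'\<close> by auto
    have "Suc y = x"
      using x above[OF x(1)] by linarith
    have "m - 1 \<le> \<alpha>"
      using \<alpha> by simp
    then have "Suc \<alpha> \<in> S"
      using assms(2,3) by (intro closed) linarith
    then have "Suc \<alpha> \<in> Dset S x"
      using Dset_Suc[of \<alpha> S y] \<alpha> \<open>Suc y = x\<close> by simp
    moreover have "m \<le> Suc \<alpha>"
      using \<open>m - 1 \<le> \<alpha>\<close> by linarith
    ultimately have "Suc \<alpha> \<in> M"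
      using M(5)[OF x(1)] by blast
    then show "\<alpha> \<in> ?M'"
      using image_eqI[of \<alpha> "\<lambda>x. x - 1" "Suc \<alpha>" M] by simp
  qed
  moreover have "int (m - 1) \<ge> 2 * int ?c - 1"
    using assms(2,3) by linarith
  moreover have "m - 1 \<in> ?M'" "\<forall>y\<in>?M'. m - 1 \<le> y"
    using M(3,4) by (auto intro: diff_le_mono)
  ultimately show ?thesis
    using M(1) unfolding amenable_def by blast
qed

theorem lemma4p21:
  fixes a b m r :: nat and M :: "nat set"
  assumes "0 < b" and "b < a"
    and "m \<ge> 2 * conductor (sg_gen {a..a+b})"
    and "amenable (sg_gen {a..a+b}) m r M"
  shows "amenable (sg_gen {a..a+b}) (m - 1) r ((\<lambda>x. x - 1) ` M)"
proof -
  let ?S = "sg_gen {a..a+b}"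
  have "a * a + n \<in> ?S" for n
    using assms(1,2) by (intro sg_gen_interval_ge_square) auto
  then have closed: "conductor ?S \<le> x \<Longrightarrow> x \<in> ?S" for x
    by (rule mem_if_conductor_le)
  have "1 \<notin> ?S"
    using assms(1,2) by (intro one_notin_sg_gen) auto
  then have "0 < conductor ?S"
    using closed[of 1] by linarith
  then show ?thesis
    using amenable_shift_down[OF closed _ assms(3,4)] by blast
qed

end
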